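(* Let $f:\mathbb{N}\to\mathbb{N}$ satisfy $\lim_{n\to\infty}f(n)=\infty$ and $f(n)=O(n^k)$ for some constant $k$. Then for every $\varepsilon>0$ there is a constant $C$ (depending only on $\varepsilon$ and $f$) such that for every $n$ and every $\mathcal{A}\subseteq\{0,1\}^n$ with $|\mathcal{A}|=f(n)$, there is a first-order sentence over $\tau_{\mathsf{string}}$ with at most $(3+\varepsilon)\log_3(n)+C$ quantifiers that is true in $\mathbf{B}_w$ for all $w\in\mathcal{A}$ and false in $\mathbf{B}_{w'}$ for all $w'\in\{0,1\}^n\setminus\mathcal{A}$.
   Context: Vocabulary $\tau_{\mathsf{string}}=\langle <, S;\ \mathsf{min},\mathsf{max}\rangle$ with $<$ binary, $S$ unary, $\mathsf{min},\mathsf{max}$ constants. A string $w=w_1\cdots w_n\in\{0,1\}^n$ ($n\geq 1$) is encoded by the structure $\mathbf{B}_w$ with universe $\{1,\dots,n\}$, $<$ the usual order, $S=\{i: w_i=1\}$, $\mathsf{min}=1$, $\mathsf{max}=n$. The number of quantifiers is the number of quantifier occurrences. *)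

theory Defs
  imports Complex_Main "HOL-Library.Landau_Symbols"
begin

datatype fo_term = FVar nat | FMin | FMax

datatype fo_formula =
    FLess fo_term fo_term
  | FEq fo_term fo_term
  | FS fo_term
  | FTrue
  | FFalse
  | FNeg fo_formula
  | FConj fo_formula fo_formula
  | FDisj fo_formula fo_formula
  | FImp fo_formula fo_formula
  | FExists nat fo_formula
  | FForall nat fo_formula

fun term_vars :: "fo_term \<Rightarrow> nat set" where
  "term_vars (FVar x) = {x}"
| "term_vars FMin = {}"
| "term_vars FMax = {}"

fun free_vars :: "fo_formula \<Rightarrow> nat set" where
  "free_vars (FLess s t) = term_vars s \<union> term_vars t"
| "free_vars (FEq s t) = term_vars s \<union> term_vars t"
| "free_vars (FS t) = term_vars t"
| "free_vars FTrue = {}"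
| "free_vars FFalse = {}"
| "free_vars (FNeg p) = free_vars p"
| "free_vars (FConj p q) = free_vars p \<union> free_vars q"
| "free_vars (FDisj p q) = free_vars p \<union> free_vars q"
| "free_vars (FImp p q) = free_vars p \<union> free_vars q"
| "free_vars (FExists x p) = free_vars p - {x}"
| "free_vars (FForall x p) = free_vars p - {x}"

definition is_sentence :: "fo_formula \<Rightarrow> bool" where
  "is_sentence p \<longleftrightarrow> free_vars p = {}"

fun num_quant :: "fo_formula \<Rightarrow> nat" where
  "num_quant (FNeg p) = num_quant p"
| "num_quant (FConj p q) = num_quant p + num_quant q"
| "num_quant (FDisj p q) = num_quant p + num_quant q"
| "num_quant (FImp p q) = num_quant p + num_quant q"
| "num_quant (FExists x p) = Suc (num_quant p)"
| "num_quant (FForall x p) = Suc (num_quant p)"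
| "num_quant _ = 0"

text \<open>The structure B_w for a binary string w = w_1...w_n (a bool list, True = 1):
  universe {1..n}, usual order, S = {i. w_i = 1}, min = 1, max = n.
  Position i (1-based) holds the list entry w ! (i-1).\<close>

fun eval_term :: "bool list \<Rightarrow> (nat \<Rightarrow> nat) \<Rightarrow> fo_term \<Rightarrow> nat" where
  "eval_term w a (FVar x) = a x"
| "eval_term w a FMin = 1"
| "eval_term w a FMax = length w"

fun sat :: "bool list \<Rightarrow> (nat \<Rightarrow> nat) \<Rightarrow> fo_formula \<Rightarrow> bool" where
  "sat w a (FLess s t) = (eval_term w a s < eval_term w a t)"
| "sat w a (FEq s t) = (eval_term w a s = eval_term w a t)"
| "sat w a (FS t) = (w ! (eval_term w a t - 1))"
| "sat w a FTrue = True"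
| "sat w a FFalse = False"
| "sat w a (FNeg p) = (\<not> sat w a p)"
| "sat w a (FConj p q) = (sat w a p \<and> sat w a q)"
| "sat w a (FDisj p q) = (sat w a p \<or> sat w a q)"
| "sat w a (FImp p q) = (sat w a p \<longrightarrow> sat w a q)"
| "sat w a (FExists x p) = (\<exists>i\<in>{1..length w}. sat w (a(x := i)) p)"
| "sat w a (FForall x p) = (\<forall>i\<in>{1..length w}. sat w (a(x := i)) p)"

text \<open>Truth of a sentence in B_w (assignment irrelevant for sentences; we use
  the constant assignment to position 1).\<close>
definition models :: "bool list \<Rightarrow> fo_formula \<Rightarrow> bool" where
  "models w p \<longleftrightarrow> sat w (\<lambda>_. 1) p"

end

theory Submission
  imports Defs "HOL-Library.FuncSet"
begin

(*
  A sentence of the form  \<exists>y_0 ... y_(s+q-1). (\<exists>x \<exists>y \<forall>u)^m \<forall>z. \<psi>  with \<psi> quantifier-free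
  defines A. The first s variables are pairwise distinct reference points and each of the q
  selector variables equals one of them, so the selectors spell out one of s^q \<ge> |A| codes,
  i.e. a word w0 \<in> A. The rest compares the structure with w0 by ternary search: x < y cut
  the current segment into pieces of about a third of its length, the universal u names the
  piece on which play continues, and after m = \<lceil>log_3 n\<rceil> rounds the segments have length at
  most 1, where \<psi> compares letters. This costs s + q + 3 log_3 n + O(1) quantifiers, and for
  |A| \<le> c n^K and s \<approx> 3^(2K/\<epsilon>) the number of selectors is q = \<lceil>log_s |A|\<rceil> \<le> (\<epsilon>/2) log_3 n + O(1).
*)

section \<open>Quantifier-free definability\<close>

lemma qf_formula_of_boolean_function:
  assumes "finite L" and "\<forall>\<phi>\<in>L. num_quant \<phi> = 0 \<and> free_vars \<phi> \<subseteq> V"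
    and "\<And>h h'. (\<forall>\<phi>\<in>L. h \<phi> = h' \<phi>) \<Longrightarrow> G h = G h'"
  shows "\<exists>\<psi>. num_quant \<psi> = 0 \<and> free_vars \<psi> \<subseteq> V \<and> (\<forall>w a. sat w a \<psi> = G (sat w a))"
  using assms
proof (induction L arbitrary: G rule: finite_induct)
  case empty
  then have "G h = G (\<lambda>_. True)" for h
    by blast
  then show ?case
    by (intro exI[of _ "if G (\<lambda>_. True) then FTrue else FFalse"]) auto
next
  case (insert \<phi> L)
  have "\<exists>\<psi>. num_quant \<psi> = 0 \<and> free_vars \<psi> \<subseteq> V \<and> (\<forall>w a. sat w a \<psi> = G ((sat w a)(\<phi> := b)))" for b
  proof (rule insert.IH)
    show "G (h(\<phi> := b)) = G (h'(\<phi> := b))" if "\<forall>\<phi>\<in>L. h \<phi> = h' \<phi>" for h h'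
      using that by (intro insert.prems(2)) simp
  qed (use insert.prems(1) in simp)
  then obtain \<psi>1 \<psi>0 where
    \<psi>1: "num_quant \<psi>1 = 0" "free_vars \<psi>1 \<subseteq> V" "\<forall>w a. sat w a \<psi>1 = G ((sat w a)(\<phi> := True))" and
    \<psi>0: "num_quant \<psi>0 = 0" "free_vars \<psi>0 \<subseteq> V" "\<forall>w a. sat w a \<psi>0 = G ((sat w a)(\<phi> := False))"
    by metis
  \<comment> \<open>Shannon expansion along \<open>\<phi>\<close>.\<close>
  have "sat w a (FDisj (FConj \<phi> \<psi>1) (FConj (FNeg \<phi>) \<psi>0)) = G (sat w a)" for w a
    using \<psi>1(3) \<psi>0(3) by (cases "sat w a \<phi>") (simp_all add: fun_upd_idem)
  with \<psi>1 \<psi>0 insert.prems(1) show ?case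
    by (intro exI[of _ "FDisj (FConj \<phi> \<psi>1) (FConj (FNeg \<phi>) \<psi>0)"]) auto
qed

definition atom_terms :: "nat \<Rightarrow> fo_term set" where
  "atom_terms N = insert FMin (insert FMax (FVar ` {..<N}))"

lemma atom_terms_simps [simp]:
  "FVar i \<in> atom_terms N \<longleftrightarrow> i < N" "FMin \<in> atom_terms N" "FMax \<in> atom_terms N"
  by (auto simp: atom_terms_def)

lemma atom_terms_mono: "N \<le> N' \<Longrightarrow> atom_terms N \<subseteq> atom_terms N'"
  by (auto simp: atom_terms_def)

lemma eval_term_cong: "t \<in> atom_terms N \<Longrightarrow> \<forall>x<N. a' x = a x \<Longrightarrow> eval_term w a' t = eval_term w a t"
  by (cases t) auto

definition atoms :: "nat \<Rightarrow> fo_formula set" where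
  "atoms N = case_prod FLess ` (atom_terms N \<times> atom_terms N) \<union>
     case_prod FEq ` (atom_terms N \<times> atom_terms N) \<union> FS ` atom_terms N"

lemma atoms_simps [simp]:
  "FLess s t \<in> atoms N \<longleftrightarrow> s \<in> atom_terms N \<and> t \<in> atom_terms N"
  "FEq s t \<in> atoms N \<longleftrightarrow> s \<in> atom_terms N \<and> t \<in> atom_terms N"
  "FS t \<in> atoms N \<longleftrightarrow> t \<in> atom_terms N"
  by (auto simp: atoms_def)

text \<open>Below, \<open>h\<close> is always a truth assignment to atomic formulas. Whatever is computed from
  \<open>restrict_atoms N h\<close> depends on finitely many atoms only, hence is quantifier-free definable.\<close>

definition restrict_atoms :: "nat \<Rightarrow> (fo_formula \<Rightarrow> bool) \<Rightarrow> fo_formula \<Rightarrow> bool" where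
  "restrict_atoms N h \<phi> \<longleftrightarrow> \<phi> \<in> atoms N \<and> h \<phi>"

lemma restrict_atoms_sat [simp]:
  assumes "s \<in> atom_terms N" "t \<in> atom_terms N"
  shows "restrict_atoms N (sat w a) (FLess s t) \<longleftrightarrow> eval_term w a s < eval_term w a t"
    "restrict_atoms N (sat w a) (FEq s t) \<longleftrightarrow> eval_term w a s = eval_term w a t"
    "restrict_atoms N (sat w a) (FS t) \<longleftrightarrow> w ! (eval_term w a t - 1)"
  using assms by (simp_all add: restrict_atoms_def)

lemma qf_formula_of_atom_function:
  "\<exists>\<psi>. num_quant \<psi> = 0 \<and> free_vars \<psi> \<subseteq> {..<N} \<and> (\<forall>w a. sat w a \<psi> = G (restrict_atoms N (sat w a)))"
proof (rule qf_formula_of_boolean_function)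
  show "finite (atoms N)"
    by (simp add: atoms_def atom_terms_def)
  have "free_vars \<phi> \<subseteq> {..<N}" if "\<phi> \<in> atoms N" for \<phi>
  proof -
    have "x < N" if "t \<in> atom_terms N" "x \<in> term_vars t" for t x
      using that by (cases t) auto
    with \<open>\<phi> \<in> atoms N\<close> show ?thesis
      unfolding atoms_def by fastforce
  qed
  then show "\<forall>\<phi>\<in>atoms N. num_quant \<phi> = 0 \<and> free_vars \<phi> \<subseteq> {..<N}"
    by (auto simp: atoms_def)
  show "G (restrict_atoms N h) = G (restrict_atoms N h')" if "\<forall>\<phi>\<in>atoms N. h \<phi> = h' \<phi>" for h h'
  proof -
    from that have "restrict_atoms N h = restrict_atoms N h'"
      by (auto simp: restrict_atoms_def fun_eq_iff)
    then show ?thesis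
      by simp
  qed
qed

section \<open>Quantifier prefixes\<close>

fun exists_block :: "nat list \<Rightarrow> fo_formula \<Rightarrow> fo_formula" where
  "exists_block [] \<phi> = \<phi>"
| "exists_block (v # vs) \<phi> = FExists v (exists_block vs \<phi>)"

lemma num_quant_exists_block [simp]: "num_quant (exists_block vs \<phi>) = length vs + num_quant \<phi>"
  by (induction vs) auto

lemma free_vars_exists_block [simp]: "free_vars (exists_block vs \<phi>) = free_vars \<phi> - set vs"
  by (induction vs) auto

lemma sat_exists_block:
  "sat w a (exists_block vs \<phi>) \<longleftrightarrow>
     (\<exists>b. (\<forall>v\<in>set vs. b v \<in> {1..length w}) \<and> (\<forall>v. v \<notin> set vs \<longrightarrow> b v = a v) \<and> sat w b \<phi>)"
    (is "_ \<longleftrightarrow> ?extends vs a")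
proof (induction vs arbitrary: a)
  case (Cons v vs)
  show ?case
  proof
    assume "sat w a (exists_block (v # vs) \<phi>)"
    then obtain i b where "i \<in> {1..length w}" "\<forall>x\<in>set vs. b x \<in> {1..length w}"
        "\<forall>x. x \<notin> set vs \<longrightarrow> b x = (a(v := i)) x" "sat w b \<phi>"
      using Cons.IH by auto
    then show "?extends (v # vs) a"
      by (intro exI[of _ b]) (auto split: if_splits)
  next
    assume "?extends (v # vs) a"
    then obtain b where b: "\<forall>x\<in>set (v # vs). b x \<in> {1..length w}"
        "\<forall>x. x \<notin> set (v # vs) \<longrightarrow> b x = a x" "sat w b \<phi>"
      by blast
    then have "sat w (a(v := b v)) (exists_block vs \<phi>)"
      by (intro Cons.IH[THEN iffD2] exI[of _ b]) auto
    with b(1) show "sat w a (exists_block (v # vs) \<phi>)"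
      by auto
  qed
qed (auto simp flip: fun_eq_iff)

fun ternary_prefix :: "nat \<Rightarrow> nat \<Rightarrow> fo_formula \<Rightarrow> fo_formula" where
  "ternary_prefix v 0 \<psi> = FForall v \<psi>"
| "ternary_prefix v (Suc k) \<psi> = FExists v (FExists (v + 1) (FForall (v + 2) (ternary_prefix (v + 3) k \<psi>)))"

lemma num_quant_ternary_prefix [simp]: "num_quant (ternary_prefix v k \<psi>) = 3 * k + 1 + num_quant \<psi>"
  by (induction k arbitrary: v) auto

lemma free_vars_ternary_prefix: "free_vars (ternary_prefix v k \<psi>) \<subseteq> free_vars \<psi> - {v..v + 3 * k}"
  by (induction k arbitrary: v) fastforce+

fun ternary_game :: "nat \<Rightarrow> nat \<Rightarrow> nat \<Rightarrow> ((nat \<Rightarrow> nat) \<Rightarrow> bool) \<Rightarrow> (nat \<Rightarrow> nat) \<Rightarrow> bool" where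
  "ternary_game n v 0 P a = (\<forall>t\<in>{1..n}. P (a(v := t)))"
| "ternary_game n v (Suc k) P a =
     (\<exists>x\<in>{1..n}. \<exists>y\<in>{1..n}. \<forall>u\<in>{1..n}. ternary_game n (v + 3) k P (a(v := x, v + 1 := y, v + 2 := u)))"

lemma sat_ternary_prefix:
  "sat w a (ternary_prefix v k \<psi>) = ternary_game (length w) v k (\<lambda>a'. sat w a' \<psi>) a"
  by (induction k arbitrary: v a) (simp_all add: numeral_3_eq_3)

lemma ternary_game_cong:
  assumes "\<And>a'. \<forall>x<v. a' x = a x \<Longrightarrow> P a' = Q a'"
  shows "ternary_game n v k P a = ternary_game n v k Q a"
  using assms
proof (induction k arbitrary: v a)
  case (Suc k)
  have "ternary_game n (v + 3) k P (a(v := x, v + 1 := y, v + 2 := u)) =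
        ternary_game n (v + 3) k Q (a(v := x, v + 1 := y, v + 2 := u))" for x y u
    by (rule Suc.IH) (simp add: Suc.prems)
  then show ?case
    by simp
qed simp

lemma ternary_game_const [simp]: "1 \<le> n \<Longrightarrow> ternary_game n v k (\<lambda>_. c) a = c"
  by (induction k arbitrary: v a) force+

lemma ternary_game_conj_const [simp]:
  "1 \<le> n \<Longrightarrow> ternary_game n v k (\<lambda>a'. c \<and> P a') a = (c \<and> ternary_game n v k P a)"
  by (cases c) simp_all

lemma ternary_game_if_const [simp]:
  "ternary_game n v k (\<lambda>a'. if c then P a' else Q a') a =
     (if c then ternary_game n v k P a else ternary_game n v k Q a)"
  by (cases c) simp_all

lemma ternary_game_last_var:
  assumes "1 \<le> n" and "\<And>a'. \<forall>x<v. a' x = a x \<Longrightarrow> P a' = Q (a' (v + 3 * k))"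
  shows "ternary_game n v k P a = (\<forall>t\<in>{1..n}. Q t)"
  using assms(2)
proof (induction k arbitrary: v a)
  case (Suc k)
  have "ternary_game n (v + 3) k P (a(v := x, v + 1 := y, v + 2 := u)) = (\<forall>t\<in>{1..n}. Q t)" for x y u
    by (rule Suc.IH) (simp add: Suc.prems add.assoc)
  with assms(1) show ?case
    by auto
qed simp

section \<open>Ternary search for a segment\<close>

definition third1 :: "nat \<Rightarrow> nat" where
  "third1 l = (l + 2) div 3"

definition third2 :: "nat \<Rightarrow> nat" where
  "third2 l = (l - third1 l + 1) div 2"

lemma third_bounds:
  assumes "2 \<le> l" "l \<le> 3 ^ Suc k"
  shows "1 \<le> third1 l" "1 \<le> third2 l" "third1 l + third2 l \<le> l"
    "third1 l \<le> 3 ^ k" "third2 l \<le> 3 ^ k" "l - third1 l - third2 l \<le> 3 ^ k"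
  using assms by (auto simp: third1_def third2_def)

definition leaf_check ::
    "(fo_formula \<Rightarrow> bool) \<Rightarrow> bool list \<Rightarrow> fo_term \<Rightarrow> nat \<Rightarrow> nat \<Rightarrow> fo_term \<Rightarrow> fo_term \<Rightarrow> bool" where
  "leaf_check h w0 u lo hi ta tb =
     (if hi = lo then h (FEq ta tb) \<and> h (FS ta) = w0 ! (lo - 1)
      else if hi = Suc lo then h (FLess ta tb) \<and> \<not> (h (FLess ta u) \<and> h (FLess u tb))
        \<and> h (FS ta) = w0 ! (lo - 1) \<and> h (FS tb) = w0 ! (hi - 1)
      else False)"

text \<open>\<open>segment_check h w0 v k lo hi ta tb\<close> asks that the elements denoted by \<open>ta\<close> and \<open>tb\<close>
  bound a segment spelling positions \<open>lo..hi\<close> of \<open>w0\<close>. In a round, \<open>x < y\<close> (variables \<open>v\<close>,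
  \<open>v + 1\<close>) cut it into pieces of lengths \<open>third1\<close>, \<open>third2\<close> and the rest, and \<open>u\<close> (variable
  \<open>v + 2\<close>) selects the piece to be checked; a \<open>u\<close> equal to no cut point imposes nothing.\<close>

fun segment_check ::
    "(fo_formula \<Rightarrow> bool) \<Rightarrow> bool list \<Rightarrow> nat \<Rightarrow> nat \<Rightarrow> nat \<Rightarrow> nat \<Rightarrow> fo_term \<Rightarrow> fo_term \<Rightarrow> bool" where
  "segment_check h w0 v 0 lo hi ta tb = leaf_check h w0 (FVar v) lo hi ta tb"
| "segment_check h w0 v (Suc k) lo hi ta tb =
     (if hi \<le> Suc lo then leaf_check h w0 (FVar (v + 3 * Suc k)) lo hi ta tb
      else let x = FVar v; y = FVar (v + 1); u = FVar (v + 2);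
               mid1 = lo + third1 (hi - lo); mid2 = mid1 + third2 (hi - lo) in
        h (FLess ta x) \<and> h (FLess x y) \<and> (h (FLess y tb) \<or> h (FEq y tb)) \<and>
        (if h (FEq u ta) then segment_check h w0 (v + 3) k lo mid1 ta x
         else if h (FEq u x) then segment_check h w0 (v + 3) k mid1 mid2 x y
         else if h (FEq u y) then segment_check h w0 (v + 3) k mid2 hi y tb
         else True))"

lemma segment_check_leaf:
  "hi \<le> Suc lo \<Longrightarrow> segment_check h w0 v k lo hi ta tb = leaf_check h w0 (FVar (v + 3 * k)) lo hi ta tb"
  by (cases k) auto

lemma segment_check_Suc_sat:
  fixes a :: "nat \<Rightarrow> nat" and w :: "bool list"
  assumes "\<not> hi \<le> Suc lo" "ta \<in> atom_terms N" "tb \<in> atom_terms N" "v + 2 < N"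
  defines "h \<equiv> restrict_atoms N (sat w a)"
    and "mid1 \<equiv> lo + third1 (hi - lo)" and "mid2 \<equiv> lo + third1 (hi - lo) + third2 (hi - lo)"
  shows "segment_check h w0 v (Suc k) lo hi ta tb \<longleftrightarrow>
    eval_term w a ta < a v \<and> a v < a (v + 1) \<and> a (v + 1) \<le> eval_term w a tb \<and>
    (if a (v + 2) = eval_term w a ta then segment_check h w0 (v + 3) k lo mid1 ta (FVar v)
     else if a (v + 2) = a v then segment_check h w0 (v + 3) k mid1 mid2 (FVar v) (FVar (v + 1))
     else if a (v + 2) = a (v + 1) then segment_check h w0 (v + 3) k mid2 hi (FVar (v + 1)) tb
     else True)"
  using assms by (auto simp: Let_def)

text \<open>Positions are 1-based and \<open>l + 1\<close> letters are compared.\<close>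

definition matches_at :: "bool list \<Rightarrow> nat \<Rightarrow> bool list \<Rightarrow> nat \<Rightarrow> nat \<Rightarrow> bool" where
  "matches_at w p w0 lo l \<longleftrightarrow> (\<forall>i\<le>l. w ! (p + i - 1) = w0 ! (lo + i - 1))"

lemma matches_at_add:
  "matches_at w p w0 lo (l1 + l2) \<longleftrightarrow> matches_at w p w0 lo l1 \<and> matches_at w (p + l1) w0 (lo + l1) l2"
proof -
  have "(\<forall>i\<le>l1 + l2. P i) \<longleftrightarrow> (\<forall>i\<le>l1. P i) \<and> (\<forall>i\<le>l2. P (l1 + i))" for P :: "nat \<Rightarrow> bool"
    by (metis add_le_cancel_left le_add_diff_inverse nat_le_linear trans_le_add1)
  then show ?thesis
    unfolding matches_at_def by (simp add: add.assoc)
qed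

lemma matches_at_three_pieces:
  assumes "1 \<le> l1" "1 \<le> l2" "l1 + l2 \<le> l" "p \<in> {1..n}" "q \<in> {1..n}"
  shows "(\<exists>x\<in>{1..n}. \<exists>y\<in>{1..n}. p < x \<and> x < y \<and> y \<le> q \<and>
            (x = p + l1 \<and> matches_at w p w0 lo l1) \<and>
            (y = x + l2 \<and> matches_at w x w0 (lo + l1) l2) \<and>
            (q = y + (l - l1 - l2) \<and> matches_at w y w0 (lo + l1 + l2) (l - l1 - l2)))
         \<longleftrightarrow> q = p + l \<and> matches_at w p w0 lo l"
proof -
  have l: "l = l1 + (l2 + (l - l1 - l2))"
    using assms(3) by simp
  have pieces: "matches_at w p w0 lo l \<longleftrightarrow> matches_at w p w0 lo l1 \<and> matches_at w (p + l1) w0 (lo + l1) l2 \<and>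
      matches_at w (p + l1 + l2) w0 (lo + l1 + l2) (l - l1 - l2)"
    by (subst l, simp only: matches_at_add add.assoc)
  show ?thesis
  proof
    assume "\<exists>x\<in>{1..n}. \<exists>y\<in>{1..n}. p < x \<and> x < y \<and> y \<le> q \<and>
            (x = p + l1 \<and> matches_at w p w0 lo l1) \<and>
            (y = x + l2 \<and> matches_at w x w0 (lo + l1) l2) \<and>
            (q = y + (l - l1 - l2) \<and> matches_at w y w0 (lo + l1 + l2) (l - l1 - l2))"
    with pieces l show "q = p + l \<and> matches_at w p w0 lo l"
      by (metis add.assoc)
  next
    assume "q = p + l \<and> matches_at w p w0 lo l"
    with pieces assms show "\<exists>x\<in>{1..n}. \<exists>y\<in>{1..n}. p < x \<and> x < y \<and> y \<le> q \<and>
            (x = p + l1 \<and> matches_at w p w0 lo l1) \<and>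
            (y = x + l2 \<and> matches_at w x w0 (lo + l1) l2) \<and>
            (q = y + (l - l1 - l2) \<and> matches_at w y w0 (lo + l1 + l2) (l - l1 - l2))"
      by (intro bexI[of _ "p + l1"] bexI[of _ "p + l1 + l2"]) auto
  qed
qed

lemma matches_at_whole_iff:
  assumes "length w = n" "length w0 = n" "1 \<le> n"
  shows "matches_at w 1 w0 1 (n - 1) \<longleftrightarrow> w = w0"
proof -
  have "(\<forall>i\<le>n - 1. w ! i = w0 ! i) \<longleftrightarrow> w = w0"
    using assms by (auto simp: list_eq_iff_nth_eq)
  then show ?thesis
    by (simp add: matches_at_def)
qed

definition segment_game :: "nat \<Rightarrow> bool list \<Rightarrow> bool list \<Rightarrow> nat \<Rightarrow> nat \<Rightarrow> nat \<Rightarrow> nat \<Rightarrow>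
    fo_term \<Rightarrow> fo_term \<Rightarrow> (nat \<Rightarrow> nat) \<Rightarrow> bool" where
  "segment_game N w w0 v k lo hi ta tb =
     ternary_game (length w) v k (\<lambda>a'. segment_check (restrict_atoms N (sat w a')) w0 v k lo hi ta tb)"

lemma segment_game_leaf:
  assumes "lo \<le> hi" "hi \<le> Suc lo" "v + 3 * k < N" "ta \<in> atom_terms v" "tb \<in> atom_terms v"
    and "eval_term w a ta \<in> {1..length w}" "eval_term w a tb \<in> {1..length w}"
  shows "segment_game N w w0 v k lo hi ta tb a \<longleftrightarrow>
     eval_term w a tb = eval_term w a ta + (hi - lo) \<and> matches_at w (eval_term w a ta) w0 lo (hi - lo)"
proof -
  define ea eb where "ea = eval_term w a ta" and "eb = eval_term w a tb"
  have N: "ta \<in> atom_terms N" "tb \<in> atom_terms N"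
    using assms(3-5) atom_terms_mono[of v N] by auto
  have R: "{1..length w} \<noteq> {}"
    using assms(6) by auto
  have "segment_game N w w0 v k lo hi ta tb a \<longleftrightarrow> (\<forall>t\<in>{1..length w}.
      if hi = lo then ea = eb \<and> w ! (ea - 1) = w0 ! (lo - 1)
      else ea < eb \<and> \<not> (ea < t \<and> t < eb) \<and> w ! (ea - 1) = w0 ! (lo - 1) \<and> w ! (eb - 1) = w0 ! (hi - 1))"
    unfolding segment_game_def
  proof (rule ternary_game_last_var)
    show "1 \<le> length w"
      using assms(6) by simp
    fix a' assume "\<forall>x<v. a' x = a x"
    then have "eval_term w a' ta = ea" "eval_term w a' tb = eb"
      using assms(4,5) by (simp_all add: ea_def eb_def eval_term_cong)
    with assms(1-3) N show "segment_check (restrict_atoms N (sat w a')) w0 v k lo hi ta tb = (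
      if hi = lo then ea = eb \<and> w ! (ea - 1) = w0 ! (lo - 1)
      else ea < eb \<and> \<not> (ea < a' (v + 3 * k) \<and> a' (v + 3 * k) < eb) \<and>
        w ! (ea - 1) = w0 ! (lo - 1) \<and> w ! (eb - 1) = w0 ! (hi - 1))"
      by (auto simp: segment_check_leaf leaf_check_def)
  qed
  also have "\<dots> \<longleftrightarrow> eb = ea + (hi - lo) \<and> matches_at w ea w0 lo (hi - lo)"
  proof (cases "hi = lo")
    case False
    with assms(1,2) have "hi = Suc lo"
      by simp
    moreover have "(\<forall>t\<in>{1..length w}. \<not> (ea < t \<and> t < eb)) \<and> ea < eb \<longleftrightarrow> eb = Suc ea"
    proof (intro iffI)
      assume *: "(\<forall>t\<in>{1..length w}. \<not> (ea < t \<and> t < eb)) \<and> ea < eb"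
      show "eb = Suc ea"
      proof (rule ccontr)
        assume "eb \<noteq> Suc ea"
        with * have "Suc ea < eb"
          by simp
        with * assms(7) show False
          unfolding eb_def by (metis atLeastAtMost_iff le_SucI less_imp_le_nat order.trans lessI le_add1 plus_1_eq_Suc)
      qed
    qed simp
    ultimately show ?thesis
      using R by (auto simp: matches_at_def le_Suc_eq)
  qed (use R in \<open>auto simp: matches_at_def\<close>)
  finally show ?thesis
    by (simp add: ea_def eb_def)
qed

lemma ball_three_points_iff:
  assumes "a \<in> R" "b \<in> R" "c \<in> R" "a \<noteq> b" "a \<noteq> c" "b \<noteq> c"
  shows "(\<forall>u\<in>R. if u = a then P u else if u = b then Q u else if u = c then S u else True) \<longleftrightarrow>
    P a \<and> Q b \<and> S c"
  using assms by (metis (full_types))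

lemma ternary_game_segment_check_Suc:
  fixes a :: "nat \<Rightarrow> nat" and x y u :: nat
  assumes "\<not> hi \<le> Suc lo" "v + 2 < N" "ta \<in> atom_terms v" "tb \<in> atom_terms v" "1 \<le> length w"
  defines "mid1 \<equiv> lo + third1 (hi - lo)" and "mid2 \<equiv> lo + third1 (hi - lo) + third2 (hi - lo)"
    and "a' \<equiv> a(v := x, v + 1 := y, v + 2 := u)"
  shows "ternary_game (length w) (v + 3) k
      (\<lambda>b. segment_check (restrict_atoms N (sat w b)) w0 v (Suc k) lo hi ta tb) a' \<longleftrightarrow>
    eval_term w a ta < x \<and> x < y \<and> y \<le> eval_term w a tb \<and>
    (if u = eval_term w a ta then segment_game N w w0 (v + 3) k lo mid1 ta (FVar v) a'
     else if u = x then segment_game N w w0 (v + 3) k mid1 mid2 (FVar v) (FVar (v + 1)) a'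
     else if u = y then segment_game N w w0 (v + 3) k mid2 hi (FVar (v + 1)) tb a'
     else True)"
  unfolding segment_game_def
proof (subst ternary_game_cong)
  have N: "ta \<in> atom_terms N" "tb \<in> atom_terms N"
    using assms(2-4) atom_terms_mono[of v N] by auto
  fix b assume "\<forall>z<v + 3. b z = a' z"
  then have "b v = x" "b (v + 1) = y" "b (v + 2) = u"
    "eval_term w b ta = eval_term w a ta" "eval_term w b tb = eval_term w a tb"
    using assms(3,4) by (auto simp: a'_def eval_term_cong)
  with segment_check_Suc_sat[OF assms(1) N assms(2)]
  show "segment_check (restrict_atoms N (sat w b)) w0 v (Suc k) lo hi ta tb \<longleftrightarrow>
    eval_term w a ta < x \<and> x < y \<and> y \<le> eval_term w a tb \<and>
    (if u = eval_term w a ta then segment_check (restrict_atoms N (sat w b)) w0 (v + 3) k lo mid1 ta (FVar v)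
     else if u = x then segment_check (restrict_atoms N (sat w b)) w0 (v + 3) k mid1 mid2 (FVar v) (FVar (v + 1))
     else if u = y then segment_check (restrict_atoms N (sat w b)) w0 (v + 3) k mid2 hi (FVar (v + 1)) tb
     else True)"
    by (simp add: mid1_def mid2_def)
qed (use assms(5) in simp)

lemma segment_game_Suc:
  fixes a :: "nat \<Rightarrow> nat"
  assumes "\<not> hi \<le> Suc lo" "v + 2 < N" "ta \<in> atom_terms v" "tb \<in> atom_terms v"
    and "eval_term w a ta \<in> {1..length w}"
  defines "mid1 \<equiv> lo + third1 (hi - lo)" and "mid2 \<equiv> lo + third1 (hi - lo) + third2 (hi - lo)"
    and "a1 \<equiv> \<lambda>x y u. a(v := x, v + 1 := y, v + 2 := u)"
  shows "segment_game N w w0 v (Suc k) lo hi ta tb a \<longleftrightarrow>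
    (\<exists>x\<in>{1..length w}. \<exists>y\<in>{1..length w}. eval_term w a ta < x \<and> x < y \<and> y \<le> eval_term w a tb \<and>
       segment_game N w w0 (v + 3) k lo mid1 ta (FVar v) (a1 x y (eval_term w a ta)) \<and>
       segment_game N w w0 (v + 3) k mid1 mid2 (FVar v) (FVar (v + 1)) (a1 x y x) \<and>
       segment_game N w w0 (v + 3) k mid2 hi (FVar (v + 1)) tb (a1 x y y))" (is "_ \<longleftrightarrow> ?rhs")
proof -
  let ?R = "{1..length w}" and ?ea = "eval_term w a ta"
  have "?ea \<in> ?R" "1 \<le> length w"
    using assms(5) by auto
  note round = ternary_game_segment_check_Suc[OF assms(1-4) \<open>1 \<le> length w\<close>, folded mid1_def mid2_def]
  have "segment_game N w w0 v (Suc k) lo hi ta tb a \<longleftrightarrow>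
      (\<exists>x\<in>?R. \<exists>y\<in>?R. \<forall>u\<in>?R. ternary_game (length w) (v + 3) k
        (\<lambda>b. segment_check (restrict_atoms N (sat w b)) w0 v (Suc k) lo hi ta tb) (a1 x y u))"
    by (simp add: segment_game_def a1_def)
  also have "\<dots> \<longleftrightarrow> ?rhs"
  proof (intro bex_cong refl)
    fix x y assume "x \<in> ?R" "y \<in> ?R"
    show "(\<forall>u\<in>?R. ternary_game (length w) (v + 3) k
        (\<lambda>b. segment_check (restrict_atoms N (sat w b)) w0 v (Suc k) lo hi ta tb) (a1 x y u)) \<longleftrightarrow>
      ?ea < x \<and> x < y \<and> y \<le> eval_term w a tb \<and>
       segment_game N w w0 (v + 3) k lo mid1 ta (FVar v) (a1 x y ?ea) \<and>
       segment_game N w w0 (v + 3) k mid1 mid2 (FVar v) (FVar (v + 1)) (a1 x y x) \<and>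
       segment_game N w w0 (v + 3) k mid2 hi (FVar (v + 1)) tb (a1 x y y)"
    proof (cases "?ea < x \<and> x < y \<and> y \<le> eval_term w a tb")
      case True
      then have "x \<noteq> ?ea" "y \<noteq> ?ea" "y \<noteq> x"
        by auto
      with True \<open>?ea \<in> ?R\<close> \<open>x \<in> ?R\<close> \<open>y \<in> ?R\<close> show ?thesis
        unfolding a1_def round by (simp add: ball_three_points_iff)
    next
      case False
      with \<open>?ea \<in> ?R\<close> show ?thesis
        unfolding a1_def round by blast
    qed
  qed
  finally show ?thesis .
qed

lemma segment_game_iff_matches_at:
  assumes "v + 3 * k < N" "lo \<le> hi" "hi - lo \<le> 3 ^ k" "ta \<in> atom_terms v" "tb \<in> atom_terms v"
    and "eval_term w a ta \<in> {1..length w}" "eval_term w a tb \<in> {1..length w}"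
  shows "segment_game N w w0 v k lo hi ta tb a \<longleftrightarrow>
     eval_term w a tb = eval_term w a ta + (hi - lo) \<and> matches_at w (eval_term w a ta) w0 lo (hi - lo)"
  using assms
proof (induction k arbitrary: v a lo hi ta tb)
  case 0
  then show ?case
    by (intro segment_game_leaf) auto
next
  case (Suc k)
  show ?case
  proof (cases "hi \<le> Suc lo")
    case True
    with Suc.prems show ?thesis
      by (intro segment_game_leaf)
  next
    case False
    define l l1 l2 where "l = hi - lo" and "l1 = third1 (hi - lo)" and "l2 = third2 (hi - lo)"
    define ea eb where "ea = eval_term w a ta" and "eb = eval_term w a tb"
    define a1 where "a1 = (\<lambda>x y u. a(v := x, v + 1 := y, v + 2 := u))"
    let ?R = "{1..length w}"
    have l: "1 \<le> l1" "1 \<le> l2" "l1 + l2 \<le> l" "l1 \<le> 3 ^ k" "l2 \<le> 3 ^ k" "l - l1 - l2 \<le> 3 ^ k"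
      using third_bounds[of l k] False Suc.prems(3) by (simp_all add: l_def l1_def l2_def)
    have terms: "ta \<in> atom_terms (v + 3)" "tb \<in> atom_terms (v + 3)"
      "FVar v \<in> atom_terms (v + 3)" "FVar (v + 1) \<in> atom_terms (v + 3)"
      using Suc.prems(4,5) atom_terms_mono[of v "v + 3"] by auto
    have eval: "eval_term w (a1 x y u) ta = ea" "eval_term w (a1 x y u) tb = eb"
      "a1 x y u v = x" "a1 x y u (Suc v) = y" for x y u
      using Suc.prems(4,5) by (auto simp: a1_def ea_def eb_def eval_term_cong)
    have N: "v + 3 + 3 * k < N"
      using Suc.prems(1) by simp
    have "segment_game N w w0 v (Suc k) lo hi ta tb a \<longleftrightarrow>
      (\<exists>x\<in>?R. \<exists>y\<in>?R. ea < x \<and> x < y \<and> y \<le> eb \<and>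
         segment_game N w w0 (v + 3) k lo (lo + l1) ta (FVar v) (a1 x y ea) \<and>
         segment_game N w w0 (v + 3) k (lo + l1) (lo + l1 + l2) (FVar v) (FVar (v + 1)) (a1 x y x) \<and>
         segment_game N w w0 (v + 3) k (lo + l1 + l2) hi (FVar (v + 1)) tb (a1 x y y))"
      using segment_game_Suc[OF False _ Suc.prems(4,5,6)] Suc.prems(1)
      by (simp add: a1_def ea_def eb_def l1_def l2_def)
    also have "\<dots> \<longleftrightarrow> (\<exists>x\<in>?R. \<exists>y\<in>?R. ea < x \<and> x < y \<and> y \<le> eb \<and>
         (x = ea + l1 \<and> matches_at w ea w0 lo l1) \<and>
         (y = x + l2 \<and> matches_at w x w0 (lo + l1) l2) \<and>
         (eb = y + (l - l1 - l2) \<and> matches_at w y w0 (lo + l1 + l2) (l - l1 - l2)))"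
    proof (intro bex_cong refl conj_cong)
      fix x y assume "x \<in> ?R" "y \<in> ?R"
      show "segment_game N w w0 (v + 3) k lo (lo + l1) ta (FVar v) (a1 x y ea) \<longleftrightarrow>
          x = ea + l1 \<and> matches_at w ea w0 lo l1"
        using Suc.IH[OF N _ _ terms(1,3), of lo "lo + l1" "a1 x y ea"] Suc.prems(6) \<open>x \<in> ?R\<close> l
        by (simp add: eval ea_def)
      show "segment_game N w w0 (v + 3) k (lo + l1) (lo + l1 + l2) (FVar v) (FVar (v + 1)) (a1 x y x) \<longleftrightarrow>
          y = x + l2 \<and> matches_at w x w0 (lo + l1) l2"
        using Suc.IH[OF N _ _ terms(3,4), of "lo + l1" "lo + l1 + l2" "a1 x y x"] \<open>x \<in> ?R\<close> \<open>y \<in> ?R\<close> l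
        by (simp add: eval)
      show "segment_game N w w0 (v + 3) k (lo + l1 + l2) hi (FVar (v + 1)) tb (a1 x y y) \<longleftrightarrow>
          eb = y + (l - l1 - l2) \<and> matches_at w y w0 (lo + l1 + l2) (l - l1 - l2)"
        using Suc.IH[OF N _ _ terms(4,2), of "lo + l1 + l2" hi "a1 x y y"] Suc.prems(7) \<open>y \<in> ?R\<close> l
        by (simp add: eval eb_def l_def diff_diff_left)
    qed
    also have "\<dots> \<longleftrightarrow> eb = ea + l \<and> matches_at w ea w0 lo l"
      using matches_at_three_pieces[OF l(1-3)] Suc.prems(6,7) by (simp add: ea_def eb_def)
    finally show ?thesis
      by (simp add: ea_def eb_def l_def)
  qed
qed

section \<open>Coding the set by reference points\<close>

definition defines_set :: "nat \<Rightarrow> bool list set \<Rightarrow> fo_formula \<Rightarrow> bool" where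
  "defines_set n A \<phi> \<longleftrightarrow>
     is_sentence \<phi> \<and> (\<forall>w\<in>A. models w \<phi>) \<and> (\<forall>w. length w = n \<and> w \<notin> A \<longrightarrow> \<not> models w \<phi>)"

lemma injective_code_exists:
  assumes "finite A" "card A \<le> s ^ q"
  shows "\<exists>code. code ` A \<subseteq> {..<q} \<rightarrow>\<^sub>E {..<s} \<and> inj_on code A"
  using card_le_inj[OF assms(1), of "{..<q} \<rightarrow>\<^sub>E {..<s}"] assms(2) by (simp add: card_PiE finite_PiE)

lemma selected_code_unique:
  assumes "inj_on b {..<s}" "code ` A \<subseteq> {..<q} \<rightarrow>\<^sub>E {..<s}" "inj_on code A" "w0 \<in> A" "w1 \<in> A"
    and "\<forall>i<q. b (s + i) = b (code w0 i)" "\<forall>i<q. b (s + i) = b (code w1 i)"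
  shows "w0 = w1"
proof -
  have "code w0 i = code w1 i" if "i < q" for i
    using assms that inj_onD[OF assms(1), of "code w0 i" "code w1 i"] by (force simp: PiE_iff)
  moreover have "code w0 \<in> {..<q} \<rightarrow>\<^sub>E {..<s}" "code w1 \<in> {..<q} \<rightarrow>\<^sub>E {..<s}"
    using assms(2,4,5) by auto
  ultimately have "code w0 = code w1"
    by (intro PiE_ext[of _ "{..<q}" "\<lambda>_. {..<s}"]) auto
  with assms(3-5) show ?thesis
    by (simp add: inj_on_eq_iff)
qed

definition coded_matrix :: "nat \<Rightarrow> nat \<Rightarrow> bool list set \<Rightarrow> (bool list \<Rightarrow> nat \<Rightarrow> nat) \<Rightarrow> nat \<Rightarrow> nat \<Rightarrow>
    (fo_formula \<Rightarrow> bool) \<Rightarrow> bool" where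
  "coded_matrix s q A code m n h \<longleftrightarrow>
     (\<forall>i<s. \<forall>j<s. i \<noteq> j \<longrightarrow> \<not> h (FEq (FVar i) (FVar j))) \<and>
     (\<exists>w0\<in>A. (\<forall>i<q. h (FEq (FVar (s + i)) (FVar (code w0 i)))) \<and>
        segment_check h w0 (s + q) m 1 n FMin FMax)"

lemma coded_matrix_sat:
  assumes "code ` A \<subseteq> {..<q} \<rightarrow>\<^sub>E {..<s}" "s + q \<le> N"
  shows "coded_matrix s q A code m n (restrict_atoms N (sat w a)) \<longleftrightarrow> inj_on a {..<s} \<and>
     (\<exists>w0\<in>A. (\<forall>i<q. a (s + i) = a (code w0 i)) \<and>
        segment_check (restrict_atoms N (sat w a)) w0 (s + q) m 1 n FMin FMax)"
proof -
  have "(\<forall>i<s. \<forall>j<s. i \<noteq> j \<longrightarrow> \<not> restrict_atoms N (sat w a) (FEq (FVar i) (FVar j))) \<longleftrightarrow> inj_on a {..<s}"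
    using assms(2) by (auto simp: inj_on_def)
  moreover have "restrict_atoms N (sat w a) (FEq (FVar (s + i)) (FVar (code w0 i))) \<longleftrightarrow> a (s + i) = a (code w0 i)"
    if "w0 \<in> A" "i < q" for w0 i
  proof -
    have "code w0 i < s"
      using assms(1) that by (auto simp: PiE_iff)
    with assms(2) that(2) show ?thesis
      by simp
  qed
  ultimately show ?thesis
    unfolding coded_matrix_def by (simp cong: bex_cong)
qed

lemma ternary_game_coded_matrix:
  assumes "1 \<le> n" "code ` A \<subseteq> {..<q} \<rightarrow>\<^sub>E {..<s}" "inj_on code A" "A \<subseteq> {w. length w = n}"
    and "n - 1 \<le> 3 ^ m" "length w = n"
    and \<psi>: "\<forall>w a. sat w a \<psi> = coded_matrix s q A code m n (restrict_atoms (s + q + 3 * m + 1) (sat w a))"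
  shows "ternary_game n (s + q) m (\<lambda>a. sat w a \<psi>) b \<longleftrightarrow>
     inj_on b {..<s} \<and> (\<exists>w0\<in>A. (\<forall>i<q. b (s + i) = b (code w0 i)) \<and> w = w0)"
proof -
  define N where "N = s + q + 3 * m + 1"
  have matrix: "sat w a \<psi> \<longleftrightarrow> inj_on b {..<s} \<and> (\<exists>w0\<in>A. (\<forall>i<q. b (s + i) = b (code w0 i)) \<and>
      segment_check (restrict_atoms N (sat w a)) w0 (s + q) m 1 n FMin FMax)"
    if "\<forall>v<s + q. a v = b v" for a
  proof -
    have "(\<forall>i<q. a (s + i) = a (code w0 i)) \<longleftrightarrow> (\<forall>i<q. b (s + i) = b (code w0 i))" if "w0 \<in> A" for w0
    proof -
      have "code w0 i < s" if "i < q" for i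
        using assms(2) \<open>w0 \<in> A\<close> that by (auto simp: PiE_iff)
      with \<open>\<forall>v<s + q. a v = b v\<close> show ?thesis
        by (metis add_less_cancel_left trans_less_add1)
    qed
    moreover have "inj_on a {..<s} \<longleftrightarrow> inj_on b {..<s}"
      using \<open>\<forall>v<s + q. a v = b v\<close> by (intro inj_on_cong) auto
    ultimately show ?thesis
      using \<psi> coded_matrix_sat[OF assms(2), of N] by (simp add: N_def)
  qed
  show ?thesis
  proof (cases "inj_on b {..<s} \<and> (\<exists>w0\<in>A. \<forall>i<q. b (s + i) = b (code w0 i))")
    case True
    then obtain w0 where w0: "w0 \<in> A" "\<forall>i<q. b (s + i) = b (code w0 i)"
      by blast
    with True selected_code_unique[OF _ assms(2,3)]
    have "sat w a \<psi> \<longleftrightarrow> segment_check (restrict_atoms N (sat w a)) w0 (s + q) m 1 n FMin FMax"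
      if "\<forall>v<s + q. a v = b v" for a
      using matrix[OF that] by metis
    then have "ternary_game n (s + q) m (\<lambda>a. sat w a \<psi>) b \<longleftrightarrow> segment_game N w w0 (s + q) m 1 n FMin FMax b"
      unfolding segment_game_def assms(6) by (rule ternary_game_cong)
    also have "\<dots> \<longleftrightarrow> matches_at w 1 w0 1 (n - 1)"
      using segment_game_iff_matches_at[of "s + q" m N 1 n FMin FMax w b w0] assms(1,5,6)
      by (simp add: N_def)
    also have "\<dots> \<longleftrightarrow> w = w0"
      using matches_at_whole_iff assms(1,4,6) w0(1) by auto
    finally show ?thesis
      using True w0 selected_code_unique[OF _ assms(2,3)] by blast
  next
    case False
    then have "ternary_game n (s + q) m (\<lambda>a. sat w a \<psi>) b \<longleftrightarrow> ternary_game n (s + q) m (\<lambda>_. False) b"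
      using matrix by (intro ternary_game_cong) auto
    with False assms(1) show ?thesis
      by auto
  qed
qed

lemma coding_assignment_exists:
  fixes s q n :: nat
  assumes "c \<in> {..<q} \<rightarrow>\<^sub>E {..<s}" "s \<le> n"
  shows "\<exists>b. (\<forall>v<s + q. b v \<in> {1..n}) \<and> (\<forall>v\<ge>s + q. b v = 1) \<and>
     inj_on b {..<s} \<and> (\<forall>i<q. b (s + i) = b (c i))"
proof -
  define b where "b v = (if v < s then v + 1 else if v < s + q then c (v - s) + 1 else 1)" for v
  have c_lt: "c i < s" if "i < q" for i
    using assms(1) that by (auto simp: PiE_iff)
  have "b v \<in> {1..n}" if "v < s + q" for v
  proof (cases "v < s")
    case False
    with that have "c (v - s) < s"
      by (intro c_lt) linarith
    with False assms(2) show ?thesis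
      by (simp add: b_def)
  qed (use assms(2) in \<open>simp add: b_def\<close>)
  with c_lt show ?thesis
    by (intro exI[of _ b]) (auto simp: b_def inj_on_def)
qed

lemma models_coded_sentence_iff:
  assumes "1 \<le> n" "s \<le> n" "code ` A \<subseteq> {..<q} \<rightarrow>\<^sub>E {..<s}" "inj_on code A" "A \<subseteq> {w. length w = n}"
    and "n - 1 \<le> 3 ^ m" "length w = n"
    and \<psi>: "\<forall>w a. sat w a \<psi> = coded_matrix s q A code m n (restrict_atoms (s + q + 3 * m + 1) (sat w a))"
  shows "models w (exists_block [0..<s + q] (ternary_prefix (s + q) m \<psi>)) \<longleftrightarrow> w \<in> A"
proof -
  have "models w (exists_block [0..<s + q] (ternary_prefix (s + q) m \<psi>)) \<longleftrightarrow>
      (\<exists>b. (\<forall>v<s + q. b v \<in> {1..n}) \<and> (\<forall>v\<ge>s + q. b v = 1) \<and> ternary_game n (s + q) m (\<lambda>a. sat w a \<psi>) b)"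
    using assms(7) by (simp add: models_def sat_exists_block sat_ternary_prefix not_less atLeast0LessThan Ball_def)
  also have "\<dots> \<longleftrightarrow> (\<exists>b. (\<forall>v<s + q. b v \<in> {1..n}) \<and> (\<forall>v\<ge>s + q. b v = 1) \<and>
      inj_on b {..<s} \<and> (\<exists>w0\<in>A. (\<forall>i<q. b (s + i) = b (code w0 i)) \<and> w = w0))"
    by (simp only: ternary_game_coded_matrix[OF assms(1,3-7) \<psi>])
  also have "\<dots> \<longleftrightarrow> w \<in> A"
  proof
    assume "w \<in> A"
    with assms(3) have "code w \<in> {..<q} \<rightarrow>\<^sub>E {..<s}"
      by blast
    from coding_assignment_exists[OF this assms(2)] obtain b where
      "\<forall>v<s + q. b v \<in> {1..n}" "\<forall>v\<ge>s + q. b v = 1" "inj_on b {..<s}" "\<forall>i<q. b (s + i) = b (code w i)"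
      by blast
    with \<open>w \<in> A\<close> show "\<exists>b. (\<forall>v<s + q. b v \<in> {1..n}) \<and> (\<forall>v\<ge>s + q. b v = 1) \<and>
        inj_on b {..<s} \<and> (\<exists>w0\<in>A. (\<forall>i<q. b (s + i) = b (code w0 i)) \<and> w = w0)"
      by (intro exI[of _ b]) auto
  qed (elim exE conjE bexE, simp)
  finally show ?thesis .
qed

lemma coded_sentence_defines_set:
  assumes "1 \<le> n" "s \<le> n" "code ` A \<subseteq> {..<q} \<rightarrow>\<^sub>E {..<s}" "inj_on code A" "A \<subseteq> {w. length w = n}"
    and "n - 1 \<le> 3 ^ m"
  shows "\<exists>\<phi>. defines_set n A \<phi> \<and> num_quant \<phi> = s + q + 3 * m + 1"
proof -
  obtain \<psi> where \<psi>: "num_quant \<psi> = 0" "free_vars \<psi> \<subseteq> {..<s + q + 3 * m + 1}"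
    "\<forall>w a. sat w a \<psi> = coded_matrix s q A code m n (restrict_atoms (s + q + 3 * m + 1) (sat w a))"
    using qf_formula_of_atom_function by blast
  define \<phi> where "\<phi> = exists_block [0..<s + q] (ternary_prefix (s + q) m \<psi>)"
  have "is_sentence \<phi>"
    using \<psi>(2) free_vars_ternary_prefix[of "s + q" m \<psi>] by (fastforce simp: is_sentence_def \<phi>_def)
  with models_coded_sentence_iff[OF assms _ \<psi>(3)] assms(5) \<psi>(1) show ?thesis
    by (intro exI[of _ \<phi>]) (auto simp: defines_set_def \<phi>_def)
qed

section \<open>Counting quantifiers\<close>

lemma nat_ceiling_log_bounds:
  fixes b x :: real
  assumes "1 < b" "1 \<le> x"
  shows "x \<le> b ^ nat \<lceil>log b x\<rceil>" "nat \<lceil>log b x\<rceil> \<le> log b x + 1"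
proof -
  have "0 \<le> log b x"
    using assms by simp
  then have m: "real (nat \<lceil>log b x\<rceil>) = of_int \<lceil>log b x\<rceil>"
    by simp
  have "x = b powr log b x"
    using assms by simp
  also have "\<dots> \<le> b powr real (nat \<lceil>log b x\<rceil>)"
    using assms(1) m by (intro powr_mono) auto
  finally show "x \<le> b ^ nat \<lceil>log b x\<rceil>"
    using assms(1) by (simp add: powr_realpow)
  show "nat \<lceil>log b x\<rceil> \<le> log b x + 1"
    using m by linarith
qed

lemma defines_set_linear_bound:
  assumes "1 \<le> n" "A \<subseteq> {w. length w = n}"
  shows "\<exists>\<phi>. defines_set n A \<phi> \<and> real (num_quant \<phi>) \<le> 3 * log 3 n + n + 6"
proof (cases "A = {w. length w = n}")
  case True
  with assms(1) show ?thesis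
    by (intro exI[of _ FTrue]) (simp add: defines_set_def is_sentence_def models_def)
next
  case False
  define m where "m = nat \<lceil>log 3 (real n)\<rceil>"
  have m: "n - 1 \<le> 3 ^ m" "m \<le> log 3 n + 1"
    using nat_ceiling_log_bounds[of 3 "real n"] assms(1) unfolding m_def by (simp_all add: of_nat_le_iff[symmetric])
  have "finite {w :: bool list. length w = n}" "card {w :: bool list. length w = n} = 2 ^ n"
    using card_lists_length_eq[of "UNIV :: bool set" n] finite_lists_length_eq[of "UNIV :: bool set" n] by simp_all
  with False assms(2) have "card A < 2 ^ n" "finite A"
    by (metis psubset_card_mono psubsetI, metis rev_finite_subset)
  moreover have "min n 2 = (if n = 1 then 1 else 2)"
    using assms(1) by simp
  ultimately have "card A \<le> min n 2 ^ n"
    by (auto simp: less_Suc_eq_le)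
  then obtain code where "code ` A \<subseteq> {..<n} \<rightarrow>\<^sub>E {..<min n 2}" "inj_on code A"
    using injective_code_exists \<open>finite A\<close> by blast
  with coded_sentence_defines_set[OF assms(1) _ _ _ assms(2) m(1)] obtain \<phi>
    where "defines_set n A \<phi>" "num_quant \<phi> = min n 2 + n + 3 * m + 1"
    by (metis min.cobounded1)
  with m(2) show ?thesis
    by (intro exI[of _ \<phi>]) auto
qed

lemma defines_set_log_card:
  assumes "2 \<le> S" "S \<le> n" "A \<subseteq> {w. length w = n}" "real (card A) \<le> x" "1 \<le> x"
  shows "\<exists>\<phi>. defines_set n A \<phi> \<and> real (num_quant \<phi>) \<le> 3 * log 3 n + log S x + S + 5"
proof -
  define m q where "m = nat \<lceil>log 3 (real n)\<rceil>" and "q = nat \<lceil>log S x\<rceil>"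
  have m: "n - 1 \<le> 3 ^ m" "m \<le> log 3 n + 1"
    using nat_ceiling_log_bounds[of 3 "real n"] assms(1,2) unfolding m_def by (simp_all add: of_nat_le_iff[symmetric])
  have "x \<le> real S ^ q" and q: "q \<le> log S x + 1"
    using nat_ceiling_log_bounds[of S x] assms(1,5) unfolding q_def by simp_all
  with assms(4) have "card A \<le> S ^ q"
    by (metis of_nat_le_iff of_nat_power order_trans)
  have "finite A"
    using assms(3) finite_lists_length_eq[of "UNIV :: bool set" n] by (simp add: finite_subset)
  with \<open>card A \<le> S ^ q\<close> obtain code where "code ` A \<subseteq> {..<q} \<rightarrow>\<^sub>E {..<S}" "inj_on code A"
    using injective_code_exists by blast
  with coded_sentence_defines_set[OF _ assms(2) _ _ assms(3) m(1)] assms(1,2) obtain \<phi>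
    where "defines_set n A \<phi>" "num_quant \<phi> = S + q + 3 * m + 1"
    by (metis le_trans one_le_numeral)
  with m(2) q show ?thesis
    by (intro exI[of _ \<phi>]) auto
qed

lemma log_le_scaled_log3:
  fixes K \<delta> S y :: real
  assumes "0 \<le> K" "0 < \<delta>" "3 powr (K / \<delta>) \<le> S" "1 \<le> y"
  shows "K * log S y \<le> \<delta> * log 3 y"
proof (cases "K = 0")
  case False
  with assms(1,2) have "1 < 3 powr (K / \<delta>)"
    by simp
  with assms(3) have S: "0 < ln S" "K / \<delta> * ln 3 \<le> ln S"
    using ln_le_cancel_iff[of "3 powr (K / \<delta>)" S] by (auto simp: ln_powr)
  then have "K * ln 3 \<le> \<delta> * ln S"
    using assms(2) by (simp add: field_simps)
  then have "K * ln y * ln 3 \<le> \<delta> * ln y * ln S"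
    using assms(4) by (metis ln_ge_zero mult.assoc mult.commute mult_left_mono)
  then show ?thesis
    using S(1) by (simp add: log_def field_simps)
qed (use assms in simp)

lemma defines_set_polynomial_card:
  fixes S n :: nat
  assumes "0 < \<delta>" "0 \<le> K" "1 \<le> c" "2 \<le> S" "3 powr (K / \<delta>) \<le> S" "S \<le> n"
    and "A \<subseteq> {w. length w = n}" "real (card A) \<le> c * real n powr K"
  shows "\<exists>\<phi>. defines_set n A \<phi> \<and> real (num_quant \<phi>) \<le> (3 + \<delta>) * log 3 n + log S c + S + 5"
proof -
  have "1 \<le> n"
    using assms(4,6) by simp
  then have "1 \<le> real n powr K"
    using assms(2) by (simp add: ge_one_powr_ge_zero)
  then have "1 \<le> c * real n powr K"
    using mult_mono[of 1 c 1 "real n powr K"] assms(3) by simp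
  then obtain \<phi> where \<phi>: "defines_set n A \<phi>"
    "real (num_quant \<phi>) \<le> 3 * log 3 n + log S (c * real n powr K) + S + 5"
    using defines_set_log_card[OF assms(4,6,7,8)] by blast
  have "log S (c * real n powr K) = log S c + K * log S n"
    using assms(3) \<open>1 \<le> n\<close> by (simp add: log_mult log_powr)
  moreover have "K * log S n \<le> \<delta> * log 3 n"
    using log_le_scaled_log3[OF assms(2,1,5)] \<open>1 \<le> n\<close> by simp
  ultimately show ?thesis
    using \<phi> by (intro exI[of _ \<phi>]) (auto simp: algebra_simps)
qed

lemma polynomial_growth_bound:
  fixes f :: "nat \<Rightarrow> nat"
  assumes "(\<lambda>n. real (f n)) \<in> O(\<lambda>n. real n powr k)"
  obtains K c N1 where "0 \<le> K" "1 \<le> c" "\<forall>n\<ge>N1. real (f n) \<le> c * real n powr K"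
proof -
  from assms obtain c where "c > 0" "eventually (\<lambda>n. norm (real (f n)) \<le> c * norm (real n powr k)) at_top"
    by (elim landau_o.bigE)
  then obtain N1 where N1: "\<forall>n\<ge>N1. real (f n) \<le> c * real n powr k"
    by (auto simp: eventually_at_top_linorder)
  have "real (f n) \<le> max c 1 * real n powr max k 0" if "max N1 1 \<le> n" for n
  proof -
    have "real (f n) \<le> c * real n powr k"
      using N1 that by simp
    also have "\<dots> \<le> max c 1 * real n powr max k 0"
      using \<open>c > 0\<close> that by (intro mult_mono powr_mono) auto
    finally show ?thesis .
  qed
  then show ?thesis
    by (intro that[of "max k 0" "max c 1" "max N1 1"]) auto
qed

lemma defines_set_quantifier_bound:
  fixes f :: "nat \<Rightarrow> nat"
  assumes "0 < \<epsilon>" "0 \<le> K" "1 \<le> c" "\<forall>n\<ge>N1. real (f n) \<le> c * real n powr K"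
  shows "\<exists>C. \<forall>n\<ge>1. \<forall>A. A \<subseteq> {w. length w = n} \<longrightarrow> card A = f n \<longrightarrow>
    (\<exists>\<phi>. defines_set n A \<phi> \<and> real (num_quant \<phi>) \<le> (3 + \<epsilon>) * log 3 n + C)"
proof -
  \<comment> \<open>\<open>S\<close> is chosen so that \<open>log S (c * n powr K) \<le> log S c + \<epsilon> / 2 * log 3 n\<close>.\<close>
  define S :: nat where "S = nat \<lceil>3 powr (K / (\<epsilon> / 2))\<rceil> + 2"
  have S: "2 \<le> S" "3 powr (K / (\<epsilon> / 2)) \<le> S"
    unfolding S_def by linarith+
  define C where "C = max (real S + log S c + 5) (real (max N1 S) + 6)"
  have "\<exists>\<phi>. defines_set n A \<phi> \<and> real (num_quant \<phi>) \<le> (3 + \<epsilon>) * log 3 n + C"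
    if n: "1 \<le> n" and A: "A \<subseteq> {w. length w = n}" "card A = f n" for n A
  proof -
    have "0 \<le> \<epsilon> * log 3 n"
      using assms(1) n by simp
    show ?thesis
    proof (cases "n < max N1 S")
      case True
      then have "real n + 6 \<le> C"
        unfolding C_def by linarith
      moreover obtain \<phi> where "defines_set n A \<phi>" "real (num_quant \<phi>) \<le> 3 * log 3 n + n + 6"
        using defines_set_linear_bound[OF n A(1)] by blast
      ultimately show ?thesis
        using \<open>0 \<le> \<epsilon> * log 3 n\<close> by (intro exI[of _ \<phi>]) (auto simp: algebra_simps)
    next
      case False
      then have "S \<le> n" "real (card A) \<le> c * real n powr K"
        using assms(4) A(2) by simp_all
      with defines_set_polynomial_card[OF _ assms(2,3) S, of n A] assms(1) A(1)
      obtain \<phi> where "defines_set n A \<phi>"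
        "real (num_quant \<phi>) \<le> (3 + \<epsilon> / 2) * log 3 n + log S c + S + 5"
        by force
      with \<open>0 \<le> \<epsilon> * log 3 n\<close> show ?thesis
        unfolding C_def by (intro exI[of _ \<phi>]) (auto simp: algebra_simps)
    qed
  qed
  then show ?thesis
    by blast
qed

theorem mainTheorem18:
  fixes f :: "nat \<Rightarrow> nat"
  assumes "filterlim f at_top sequentially"
    and "\<exists>k::real. (\<lambda>n. real (f n)) \<in> O(\<lambda>n. real n powr k)"
  shows "\<forall>\<epsilon>>0. \<exists>C::real. \<forall>n\<ge>1. \<forall>A. A \<subseteq> {w :: bool list. length w = n} \<longrightarrow> card A = f n \<longrightarrow>
           (\<exists>\<phi>. is_sentence \<phi> \<and> real (num_quant \<phi>) \<le> (3 + \<epsilon>) * log 3 (real n) + C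
               \<and> (\<forall>w\<in>A. models w \<phi>)
               \<and> (\<forall>w'. length w' = n \<and> w' \<notin> A \<longrightarrow> \<not> models w' \<phi>))"
proof -
  have "\<exists>C. \<forall>n\<ge>1. \<forall>A. A \<subseteq> {w. length w = n} \<longrightarrow> card A = f n \<longrightarrow>
    (\<exists>\<phi>. defines_set n A \<phi> \<and> real (num_quant \<phi>) \<le> (3 + \<epsilon>) * log 3 n + C)" if "0 < \<epsilon>" for \<epsilon>
  proof -
    from assms(2) obtain k where "(\<lambda>n. real (f n)) \<in> O(\<lambda>n. real n powr k)" ..
    then obtain K c N1 where "0 \<le> K" "1 \<le> c" "\<forall>n\<ge>N1. real (f n) \<le> c * real n powr K"
      by (rule polynomial_growth_bound)
    with \<open>0 < \<epsilon>\<close> show ?thesis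
      by (rule defines_set_quantifier_bound)
  qed
  then show ?thesis
    unfolding defines_set_def by (simp only: conj_ac) blast
qed

end
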